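(* Let $k \ge 2$, $\rho \ge 1$ and $v$ be integers (for which $\beta(\rho,v,k)$ is defined). Then \[ \beta(\rho,v,k) \le \rho\left( \frac{k^2(\rho-1)}{2} + 1 + \max\left\{ k(k-1), \left\lfloor \frac{v-k\rho}{k-1} \right\rfloor \right\} \right). \]
   Context: For integers $v \ge k \ge 2$, a $(v,k)$-packing is a pair $(X,\mathcal{B})$ where $X$ is a set of $v$ points and $\mathcal{B}$ is a set of $k$-subsets of $X$ (blocks) such that every pair of distinct points lies in at most one block. A partial parallel class (PPC) is a set of pairwise disjoint blocks; its size is the number of blocks. A PPC of size $\rho$ is maximum if the packing has no PPC of size $\rho+1$. $\beta(\rho,v,k)$ denotes the maximum number of blocks in a $(v,k)$-packing in which the maximum PPC has size $\rho$. *)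

theory Defs
  imports Complex_Main "HOL-Library.Disjoint_Sets"
begin

definition packing :: "'a set \<Rightarrow> 'a set set \<Rightarrow> nat \<Rightarrow> bool" where
  "packing X B k \<longleftrightarrow> finite X \<and> (\<forall>b\<in>B. b \<subseteq> X \<and> card b = k) \<and>
     (\<forall>x\<in>X. \<forall>y\<in>X. x \<noteq> y \<longrightarrow> card {b\<in>B. x \<in> b \<and> y \<in> b} \<le> 1)"

definition ppc :: "'a set set \<Rightarrow> 'a set set \<Rightarrow> bool" where
  "ppc B P \<longleftrightarrow> P \<subseteq> B \<and> disjoint P"

definition max_ppc_size :: "'a set set \<Rightarrow> nat \<Rightarrow> bool" where
  "max_ppc_size B rho \<longleftrightarrow> (\<exists>P. ppc B P \<and> card P = rho) \<and> \<not> (\<exists>P. ppc B P \<and> card P = rho + 1)"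

text \<open>beta(rho,v,k): maximum number of blocks of a (v,k)-packing whose maximum PPC has
size rho (point sets taken, without loss of generality, as sets of naturals).\<close>
definition beta_packings :: "nat \<Rightarrow> nat \<Rightarrow> nat \<Rightarrow> nat set" where
  "beta_packings rho v k = {card B | X B. card X = v \<and> packing (X :: nat set) B k \<and> max_ppc_size B rho}"

definition beta :: "nat \<Rightarrow> nat \<Rightarrow> nat \<Rightarrow> nat" where
  "beta rho v k = Max (beta_packings rho v k)"

end

theory Submission
  imports Defs
begin

(* Fix a maximum partial parallel class P = {B_1, ..., B_rho} and let U be the union of its
   blocks, so |U| = k rho; by maximality every block meets U. Call a block private to B_i if it
   meets U only inside B_i. Two private blocks of B_i must intersect, for otherwise they could
   replace B_i in P. So the private blocks other than B_i form an intersecting family, each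
   member meeting B_i in exactly one point. Either all of them pass through one point a, and then
   removing a leaves pairwise disjoint (k - 1)-sets outside U, so there are at most
   (v - k rho)/(k - 1) of them; or every point of B_i lies on at most k - 1 of them, and there
   are at most k(k - 1). Each remaining block contains two points of U from different members
   of P, i.e. two of the k^2 rho (rho - 1) ordered pairs of such points, and no pair is covered
   twice. *)

locale block_packing =
  fixes X :: "'a set" and B :: "'a set set" and k :: nat
  assumes packing: "packing X B k"
begin

lemma finite_points: "finite X"
  using packing unfolding packing_def by blast

lemma block_subset: "b \<in> B \<Longrightarrow> b \<subseteq> X"
  using packing unfolding packing_def by blast

lemma card_block: "b \<in> B \<Longrightarrow> card b = k"
  using packing unfolding packing_def by blast

lemma finite_block: "b \<in> B \<Longrightarrow> finite b"
  using block_subset finite_points finite_subset by blast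

lemma finite_blocks: "finite B"
  using block_subset finite_points by (meson Pow_iff finite_Pow_iff finite_subset subsetI)

lemma block_eq_if_two_common:
  assumes "b1 \<in> B" "b2 \<in> B" "x \<in> b1" "y \<in> b1" "x \<in> b2" "y \<in> b2" "x \<noteq> y"
  shows "b1 = b2"
proof -
  have "x \<in> X" "y \<in> X" using assms block_subset by blast+
  then have "card {b\<in>B. x \<in> b \<and> y \<in> b} \<le> 1"
    using packing \<open>x \<noteq> y\<close> unfolding packing_def by blast
  moreover have "b1 \<in> {b\<in>B. x \<in> b \<and> y \<in> b}" "b2 \<in> {b\<in>B. x \<in> b \<and> y \<in> b}"
    using assms by auto
  ultimately show ?thesis using finite_blocks by (auto simp: card_le_Suc0_iff_eq)
qed

lemma card_star:
  assumes "F \<subseteq> B" and "\<And>C. C \<in> F \<Longrightarrow> a \<in> C"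
  shows "card (\<Union>C\<in>F. C - {a}) = card F * (k - 1)"
proof -
  have "card (\<Union>C\<in>F. C - {a}) = (\<Sum>C\<in>F. card (C - {a}))"
  proof (rule card_UN_disjoint)
    show "finite F" using assms(1) finite_blocks finite_subset by blast
    show "\<forall>C\<in>F. finite (C - {a})" using assms(1) finite_block by blast
    show "\<forall>C\<in>F. \<forall>C'\<in>F. C \<noteq> C' \<longrightarrow> (C - {a}) \<inter> (C' - {a}) = {}"
    proof (intro ballI impI)
      fix C C' assume C: "C \<in> F" "C' \<in> F" "C \<noteq> C'"
      have "y \<notin> C'" if "y \<in> C - {a}" for y
        using that C assms block_eq_if_two_common[of C C' a y] by blast
      then show "(C - {a}) \<inter> (C' - {a}) = {}" by blast
    qed
  qed
  also have "\<dots> = (\<Sum>C\<in>F. k - 1)"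
    using assms card_block finite_block by (intro sum.cong) auto
  finally show ?thesis by simp
qed

lemma card_blocks_through_le:
  assumes F: "F \<subseteq> B" and A: "A \<in> B" "A \<notin> F" "a \<in> A"
    and D: "D \<in> F" "a \<notin> D" "D \<inter> A \<noteq> {}"
    and meets_D: "\<And>C. C \<in> F \<Longrightarrow> C \<inter> D \<noteq> {}"
  shows "card {C\<in>F. a \<in> C} \<le> k - 1"
proof -
  have "\<forall>C\<in>F. \<exists>z. z \<in> C \<inter> D" using meets_D by blast
  then obtain g where g: "\<And>C. C \<in> F \<Longrightarrow> g C \<in> C \<inter> D" by metis
  have a_ne_g: "a \<noteq> g C" if "C \<in> F" for C
    using g[OF that] D(2) by blast
  have "inj_on g {C\<in>F. a \<in> C}"
  proof (rule inj_onI)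
    fix C C' assume "C \<in> {C\<in>F. a \<in> C}" "C' \<in> {C\<in>F. a \<in> C}" and eq: "g C = g C'"
    then have C: "C \<in> F" "a \<in> C" and C': "C' \<in> F" "a \<in> C'" by auto
    have "g C \<in> C" "g C \<in> C'" using g[OF C(1)] g[OF C'(1)] eq by auto
    then show "C = C'"
      using C C' F a_ne_g[OF C(1)] by (intro block_eq_if_two_common[of C C' a "g C"]) auto
  qed
  moreover have "g ` {C\<in>F. a \<in> C} \<subseteq> D - A"
  proof
    fix z assume "z \<in> g ` {C\<in>F. a \<in> C}"
    then obtain C where C: "C \<in> F" "a \<in> C" "z = g C" by blast
    have "C \<noteq> A" using C(1) A(2) by blast
    then have "z \<notin> A"
      using block_eq_if_two_common[of C A a z] C g[OF C(1)] a_ne_g[OF C(1)] A F by blast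
    then show "z \<in> D - A" using g[OF C(1)] C(3) by blast
  qed
  moreover have D_B: "D \<in> B" using D(1) F by blast
  ultimately have "card {C\<in>F. a \<in> C} \<le> card (D - A)"
    using finite_block by (intro card_inj_on_le) auto
  also have "card (D - A) < card D"
    using D(3) finite_block[OF D_B] by (intro psubset_card_mono) auto
  finally show ?thesis using card_block[OF D_B] by simp
qed

lemma intersecting_family_card_le:
  assumes F: "F \<subseteq> B" and A: "A \<in> B" "A \<notin> F"
    and meets_A: "\<And>C. C \<in> F \<Longrightarrow> C \<inter> A \<noteq> {}"
    and intersecting: "\<And>C D. C \<in> F \<Longrightarrow> D \<in> F \<Longrightarrow> C \<inter> D \<noteq> {}"
  shows "card F \<le> k * (k - 1) \<or> card F * (k - 1) \<le> card (\<Union>F - A)"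
proof (cases "\<exists>a\<in>A. \<forall>C\<in>F. a \<in> C")
  case True
  then obtain a where a: "a \<in> A" "\<And>C. C \<in> F \<Longrightarrow> a \<in> C" by blast
  have "y \<notin> A" if "C \<in> F" "y \<in> C - {a}" for C y
  proof
    assume "y \<in> A"
    then have "C = A"
      using that a A F by (intro block_eq_if_two_common[of C A a y]) auto
    then show False using that A(2) by blast
  qed
  then have "(\<Union>C\<in>F. C - {a}) \<subseteq> \<Union>F - A" by blast
  moreover have "finite (\<Union>F - A)"
    using F block_subset finite_points by (meson Diff_subset Sup_least finite_subset subsetD)
  ultimately have "card (\<Union>C\<in>F. C - {a}) \<le> card (\<Union>F - A)" by (rule card_mono[rotated])
  then show ?thesis using card_star[OF F a(2)] by simp
next
  case False
  have "card {C\<in>F. a \<in> C} \<le> k - 1" if "a \<in> A" for a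
  proof -
    obtain D where D: "D \<in> F" "a \<notin> D" using False \<open>a \<in> A\<close> by blast
    show ?thesis
      by (rule card_blocks_through_le[OF F A \<open>a \<in> A\<close> D meets_A[OF D(1)] intersecting[OF _ D(1)]])
  qed
  then have "(\<Sum>a\<in>A. card {C\<in>F. a \<in> C}) \<le> (\<Sum>a\<in>A. k - 1)" by (rule sum_mono)
  moreover have "F = (\<Union>a\<in>A. {C\<in>F. a \<in> C})" using meets_A by blast
  then have "card F \<le> (\<Sum>a\<in>A. card {C\<in>F. a \<in> C})"
    using card_UN_le[OF finite_block[OF A(1)], of "\<lambda>a. {C\<in>F. a \<in> C}"] by simp
  ultimately show ?thesis using card_block[OF A(1)] by simp
qed

lemma card_blocks_mult_le_card_pairs:
  assumes N: "N \<subseteq> B" and S: "finite S" "S \<inter> Id = {}"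
    and many: "\<And>C. C \<in> N \<Longrightarrow> m \<le> card (C \<times> C \<inter> S)"
  shows "m * card N \<le> card S"
proof -
  have finite_N: "finite N" using N finite_blocks finite_subset by blast
  have "m * card N = (\<Sum>C\<in>N. m)" by simp
  also have "\<dots> \<le> (\<Sum>C\<in>N. card (C \<times> C \<inter> S))" using many by (rule sum_mono)
  also have "\<dots> = card (\<Union>C\<in>N. C \<times> C \<inter> S)"
  proof (rule card_UN_disjoint[symmetric, OF finite_N])
    show "\<forall>C\<in>N. finite (C \<times> C \<inter> S)" using S(1) by blast
    show "\<forall>C\<in>N. \<forall>C'\<in>N. C \<noteq> C' \<longrightarrow> (C \<times> C \<inter> S) \<inter> (C' \<times> C' \<inter> S) = {}"
    proof (intro ballI impI)
      fix C C' assume C: "C \<in> N" "C' \<in> N" "C \<noteq> C'"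
      have "p \<notin> C' \<times> C'" if p: "p \<in> C \<times> C \<inter> S" for p
      proof
        assume "p \<in> C' \<times> C'"
        moreover obtain x y where "p = (x, y)" "x \<noteq> y" using p S(2) by (cases p) auto
        ultimately have "C = C'"
          using p C N by (intro block_eq_if_two_common[of C C' x y]) auto
        then show False using C(3) by blast
      qed
      then show "(C \<times> C \<inter> S) \<inter> (C' \<times> C' \<inter> S) = {}" by blast
    qed
  qed
  also have "\<dots> \<le> card S" using S(1) by (intro card_mono) auto
  finally show ?thesis .
qed

end

locale maximum_ppc = block_packing +
  fixes P :: "'a set set" and rho :: nat
  assumes k_ge_2: "2 \<le> k" and ppc: "ppc B P" and card_P: "card P = rho"
    and maximum: "max_ppc_size B rho"
begin

definition covered :: "'a set" where
  "covered = \<Union>P"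

definition private_blocks :: "'a set \<Rightarrow> 'a set set" where
  "private_blocks A = {C\<in>B. C \<inter> covered \<subseteq> A}"

definition cross_pairs :: "('a \<times> 'a) set" where
  "cross_pairs = covered \<times> covered - (\<Union>A\<in>P. A \<times> A)"

lemma P_subset: "P \<subseteq> B"
  using ppc unfolding ppc_def by blast

lemma finite_P: "finite P"
  using P_subset finite_blocks finite_subset by blast

lemma disjoint_ppc: "disjoint P"
  using ppc unfolding ppc_def by blast

lemma ppc_blocks_disjoint: "A \<in> P \<Longrightarrow> A' \<in> P \<Longrightarrow> A \<noteq> A' \<Longrightarrow> A \<inter> A' = {}"
  using disjoint_ppc unfolding pairwise_def disjnt_def by blast

lemma no_larger_ppc: "Q \<subseteq> B \<Longrightarrow> disjoint Q \<Longrightarrow> card Q \<noteq> rho + 1"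
  using maximum unfolding max_ppc_size_def ppc_def by blast

lemma block_nonempty: "C \<in> B \<Longrightarrow> C \<noteq> {}"
  using card_block k_ge_2 by fastforce

lemma covered_subset: "covered \<subseteq> X"
  unfolding covered_def using P_subset block_subset by blast

lemma finite_covered: "finite covered"
  using covered_subset finite_points finite_subset by blast

lemma card_covered: "card covered = k * rho"
proof -
  have "card covered = (\<Sum>A\<in>P. card A)"
    unfolding covered_def using disjoint_ppc P_subset finite_block
    by (intro card_Union_disjoint) auto
  also have "\<dots> = (\<Sum>A\<in>P. k)" using P_subset card_block by (intro sum.cong) auto
  finally show ?thesis using card_P by simp
qed

lemma block_meets_covered:
  assumes C: "C \<in> B"
  shows "C \<inter> covered \<noteq> {}"
proof
  assume disjoint_C: "C \<inter> covered = {}"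
  then have "C \<notin> P" using block_nonempty[OF C] unfolding covered_def by blast
  then have "card (insert C P) = rho + 1" using finite_P card_P by simp
  moreover have "disjoint (insert C P)"
    using disjoint_ppc disjoint_C unfolding pairwise_insert covered_def disjnt_def by blast
  ultimately show False using no_larger_ppc P_subset C by blast
qed

lemma private_block_disjnt:
  assumes "C \<in> private_blocks A" "A \<in> P" "A' \<in> P" "A' \<noteq> A"
  shows "disjnt C A'"
proof -
  have "C \<inter> A' \<subseteq> A \<inter> A'"
    using assms(1,3) unfolding private_blocks_def covered_def by blast
  then show ?thesis using ppc_blocks_disjoint[OF assms(2,3) assms(4)[symmetric]] by (auto simp: disjnt_def)
qed

lemma private_blocks_intersect:
  assumes A: "A \<in> P" and C: "C \<in> private_blocks A" and C': "C' \<in> private_blocks A"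
  shows "C \<inter> C' \<noteq> {}"
proof
  assume disjoint_CC': "C \<inter> C' = {}"
  let ?Q = "insert C (insert C' (P - {A}))"
  have avoid: "disjnt E A'" if "E \<in> {C, C'}" "A' \<in> P - {A}" for E A'
    using that private_block_disjnt[OF _ A] C C' by blast
  have B: "C \<in> B" "C' \<in> B" using C C' unfolding private_blocks_def by auto
  have "C \<noteq> C'" using disjoint_CC' block_nonempty[OF B(1)] by blast
  moreover have "C \<notin> P - {A}" "C' \<notin> P - {A}"
    using avoid[of C C] avoid[of C' C'] block_nonempty[OF B(1)] block_nonempty[OF B(2)]
    by (auto simp: disjnt_def)
  moreover have "0 < rho" using A finite_P card_P by (auto simp: card_gt_0_iff)
  ultimately have "card ?Q = rho + 1"
    using A finite_P card_P by simp
  moreover have "disjoint (P - {A})"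
    using disjoint_ppc by (rule pairwise_subset) blast
  then have "disjoint ?Q"
    unfolding pairwise_insert using disjoint_CC' avoid by (auto simp: disjnt_sym disjnt_def)
  moreover have "?Q \<subseteq> B" using B P_subset by blast
  ultimately show False using no_larger_ppc by blast
qed

lemma card_private_blocks_le:
  assumes A: "A \<in> P"
  shows "card (private_blocks A) \<le> 1 + max (k * (k - 1)) ((card X - k * rho) div (k - 1))"
proof -
  define F where "F = private_blocks A - {A}"
  have F: "F \<subseteq> B" unfolding F_def private_blocks_def by blast
  have "\<Union>F - A \<subseteq> X - covered"
    using F block_subset unfolding F_def private_blocks_def by blast
  then have "card (\<Union>F - A) \<le> card (X - covered)"
    using finite_points by (intro card_mono) auto
  also have "\<dots> = card X - k * rho"
    using card_Diff_subset[OF finite_covered covered_subset] card_covered by simp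
  finally have "card (\<Union>F - A) \<le> card X - k * rho" .
  moreover have "card F \<le> k * (k - 1) \<or> card F * (k - 1) \<le> card (\<Union>F - A)"
  proof (rule intersecting_family_card_le[OF F])
    show "A \<in> B" "A \<notin> F" using A P_subset unfolding F_def by auto
    show "C \<inter> A \<noteq> {}" if "C \<in> F" for C
      using that block_meets_covered F unfolding F_def private_blocks_def by blast
    show "C \<inter> D \<noteq> {}" if "C \<in> F" "D \<in> F" for C D
      using that private_blocks_intersect[OF A] unfolding F_def by blast
  qed
  moreover have "card F \<le> (card X - k * rho) div (k - 1)"
    if "card F * (k - 1) \<le> card X - k * rho"
    using that k_ge_2 by (simp add: less_eq_div_iff_mult_less_eq)
  ultimately have "card F \<le> max (k * (k - 1)) ((card X - k * rho) div (k - 1))"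
    by linarith
  moreover have "finite (private_blocks A)"
    using finite_blocks unfolding private_blocks_def by simp
  then have "card (private_blocks A) \<le> 1 + card F"
    using card_Suc_Diff1[of "private_blocks A" A] unfolding F_def
    by (cases "A \<in> private_blocks A") auto
  ultimately show ?thesis by linarith
qed

lemma card_cross_pairs: "card cross_pairs = k * k * rho * (rho - 1)"
proof -
  have "card (\<Union>A\<in>P. A \<times> A) = (\<Sum>A\<in>P. card (A \<times> A))"
    using finite_P P_subset finite_block ppc_blocks_disjoint by (intro card_UN_disjoint) blast+
  also have "\<dots> = (\<Sum>A\<in>P. k * k)"
    using P_subset card_block by (intro sum.cong) (auto simp: card_cartesian_product)
  also have "\<dots> = rho * (k * k)" using card_P by simp
  finally have "card (\<Union>A\<in>P. A \<times> A) = rho * (k * k)" .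
  moreover have "(\<Union>A\<in>P. A \<times> A) \<subseteq> covered \<times> covered" unfolding covered_def by blast
  ultimately have "card cross_pairs = (k * rho) * (k * rho) - rho * (k * k)"
    unfolding cross_pairs_def using finite_covered card_covered
    by (simp add: card_Diff_subset finite_subset card_cartesian_product)
  then show ?thesis by (simp add: algebra_simps diff_mult_distrib2)
qed

lemma two_le_card_cross_pairs_in_block:
  assumes C: "C \<in> B" "C \<notin> (\<Union>A\<in>P. private_blocks A)"
  shows "2 \<le> card (C \<times> C \<inter> cross_pairs)"
proof -
  obtain x A where x: "x \<in> C" "A \<in> P" "x \<in> A"
    using block_meets_covered[OF C(1)] unfolding covered_def by blast
  obtain y where y: "y \<in> C" "y \<in> covered" "y \<notin> A"
    using C x unfolding private_blocks_def by blast
  have "(x, y) \<in> cross_pairs" "(y, x) \<in> cross_pairs"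
    using x y ppc_blocks_disjoint[OF x(2)] unfolding cross_pairs_def covered_def by blast+
  then have "{(x, y), (y, x)} \<subseteq> C \<times> C \<inter> cross_pairs" using x y by blast
  moreover have "finite (C \<times> C \<inter> cross_pairs)" using finite_block[OF C(1)] by simp
  ultimately have "card {(x, y), (y, x)} \<le> card (C \<times> C \<inter> cross_pairs)"
    by (rule card_mono[rotated])
  moreover have "(x, y) \<noteq> (y, x)" using x y by blast
  ultimately show ?thesis by simp
qed

lemma card_blocks_le:
  "2 * card B \<le> 2 * rho * (1 + max (k * (k - 1)) ((card X - k * rho) div (k - 1)))
                + k * k * rho * (rho - 1)"
proof -
  define M where "M = max (k * (k - 1)) ((card X - k * rho) div (k - 1))"
  define N where "N = B - (\<Union>A\<in>P. private_blocks A)"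
  have "card (\<Union>A\<in>P. private_blocks A) \<le> (\<Sum>A\<in>P. card (private_blocks A))"
    by (rule card_UN_le[OF finite_P])
  also have "\<dots> \<le> (\<Sum>A\<in>P. 1 + M)"
    using card_private_blocks_le unfolding M_def by (rule sum_mono)
  finally have "card (\<Union>A\<in>P. private_blocks A) \<le> rho * (1 + M)" using card_P by simp
  moreover have "B = (\<Union>A\<in>P. private_blocks A) \<union> N"
    unfolding N_def private_blocks_def by blast
  then have "card B \<le> card (\<Union>A\<in>P. private_blocks A) + card N" by (metis card_Un_le)
  moreover have "2 * card N \<le> card cross_pairs"
  proof (rule card_blocks_mult_le_card_pairs)
    show "N \<subseteq> B" unfolding N_def by blast
    show "finite cross_pairs" "cross_pairs \<inter> Id = {}"
      using finite_covered unfolding cross_pairs_def covered_def by auto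
    show "2 \<le> card (C \<times> C \<inter> cross_pairs)" if "C \<in> N" for C
      using that two_le_card_cross_pairs_in_block unfolding N_def by blast
  qed
  ultimately show ?thesis unfolding M_def card_cross_pairs by linarith
qed

lemma k_rho_le_card_points: "k * rho \<le> card X"
  using card_covered card_mono[OF finite_points covered_subset] by simp

end

lemma packing_card_le:
  fixes X :: "'a set"
  assumes packing: "packing X B k" and maximum: "max_ppc_size B rho" and k: "2 \<le> k"
  shows "real (card B) \<le> real rho * (real (k^2) * (real rho - 1) / 2 + 1 +
           max (real (k * (k - 1)))
               (real_of_int (floor ((real (card X) - real k * real rho) / (real k - 1)))))"
proof -
  obtain P where "ppc B P" "card P = rho" using maximum unfolding max_ppc_size_def by blast
  then interpret maximum_ppc X B k P rho
    using packing maximum k by unfold_locales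
  define M where "M = max (k * (k - 1)) ((card X - k * rho) div (k - 1))"
  have "(real (card X) - real k * real rho) / (real k - 1)
        = real (card X - k * rho) / real (k - 1)"
    using k_rho_le_card_points k by simp
  then have max_eq: "max (real (k * (k - 1)))
               (real_of_int (floor ((real (card X) - real k * real rho) / (real k - 1)))) = real M"
    unfolding M_def of_nat_max by (simp only: floor_divide_of_nat_eq of_int_of_nat_eq)
  have "real (rho * (rho - 1)) = real rho * (real rho - 1)"
    by (cases rho) (auto simp: algebra_simps)
  then have card_B: "2 * real (card B) \<le> 2 * real rho * (1 + real M) + real k * real k * real rho * (real rho - 1)"
    using card_blocks_le unfolding M_def[symmetric]
    by (metis (mono_tags, opaque_lifting) of_nat_le_iff of_nat_mult of_nat_add of_nat_1
        of_nat_numeral mult.assoc)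
  then show ?thesis unfolding max_eq by (simp add: field_simps power2_eq_square)
qed

lemma beta_le:
  assumes "beta_packings rho v k \<noteq> {}"
    and bounded: "\<And>(X :: nat set) B. packing X B k \<Longrightarrow> max_ppc_size B rho \<Longrightarrow> card X = v \<Longrightarrow>
                   real (card B) \<le> c"
  shows "real (beta rho v k) \<le> c"
proof -
  have bounded_set: "real n \<le> c" if "n \<in> beta_packings rho v k" for n
    using that bounded unfolding beta_packings_def by blast
  have "beta_packings rho v k \<subseteq> {..nat \<lceil>c\<rceil>}"
  proof
    fix n assume "n \<in> beta_packings rho v k"
    then have "real n \<le> c" by (rule bounded_set)
    then have "real n \<le> real (nat \<lceil>c\<rceil>)" by linarith
    then show "n \<in> {..nat \<lceil>c\<rceil>}" by simp
  qed
  then have "finite (beta_packings rho v k)" by (rule finite_subset) simp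
  then have "beta rho v k \<in> beta_packings rho v k"
    unfolding beta_def using assms(1) by (rule Max_in)
  then show ?thesis by (rule bounded_set)
qed

theorem theorem5p4:
  fixes rho v k :: nat
  assumes "k \<ge> 2" and "rho \<ge> 1"
    and "beta_packings rho v k \<noteq> {}"
  shows "real (beta rho v k) \<le> real rho * (real (k^2) * (real rho - 1) / 2 + 1 +
           max (real (k * (k - 1)))
               (real_of_int (floor ((real v - real k * real rho) / (real k - 1)))))"
  by (rule beta_le[OF assms(3)]) (auto dest: packing_card_le[OF _ _ assms(1)])

end
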